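(* Let $\ell>1$ and $4m_c^2\ge(3\ell-1)^2$. Then there is a constant $C$ such that $$\int_0^{\phi(t)-\phi(b)}|E(r,t;b)|\,dr\le C|\phi(b)|^{\frac{1}{1-\ell}}\Big(1+\ln\frac{\phi(b)}{\phi(t)}\Big)^{1-\operatorname{sgn}M}$$ for all $t\in[1,\infty)$ and $1\le b\le t$.
   Context: $\phi(t)=\frac{t^{1-\ell}}{1-\ell}$ (so $\phi<0$ and $\phi(t)-\phi(b)>0$ for $1\le b<t$). $M=\frac{\sqrt{4m_c^2-(1-3\ell)^2}}{2(\ell-1)}\ge0$, $a:=\frac12+iM$, and $\operatorname{sgn}M\in\{0,1\}$ is $1$ iff $M>0$. The kernel is $$E(r,t;b)=2^{2a}(1-\ell)^{\frac{\ell}{1-\ell}}\phi(b)^{\frac{\ell}{1-\ell}+2a}\big((\phi(t)+\phi(b))^2-r^2\big)^{-a}F\Big(a,a;1;\frac{(\phi(t)-\phi(b))^2-r^2}{(\phi(t)+\phi(b))^2-r^2}\Big),$$ with $F$ Gauss's hypergeometric function and complex powers taken with the principal branch. *)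

theory Defs
  imports "HOL-Analysis.Analysis"
begin

definition phi :: "real \<Rightarrow> real \<Rightarrow> real" where
  "phi l t = t powr (1 - l) / (1 - l)"

definition Mpar :: "real \<Rightarrow> real \<Rightarrow> real" where
  "Mpar l mc = sqrt (4 * mc\<^sup>2 - (1 - 3 * l)\<^sup>2) / (2 * (l - 1))"

definition apar :: "real \<Rightarrow> real \<Rightarrow> complex" where
  "apar l mc = 1/2 + \<i> * complex_of_real (Mpar l mc)"

text \<open>Gauss hypergeometric function F(a,b;c;z) as its power series
  (used only for |z| < 1).\<close>
definition hyp2F1 :: "complex \<Rightarrow> complex \<Rightarrow> complex \<Rightarrow> complex \<Rightarrow> complex" where
  "hyp2F1 a b c z =
     (\<Sum>n. pochhammer a n * pochhammer b n / (pochhammer c n * of_nat (fact n)) * z ^ n)"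

text \<open>The kernel E(r,t;b); complex powers use the principal branch (powr on complex).\<close>
definition Ekernel :: "real \<Rightarrow> real \<Rightarrow> real \<Rightarrow> real \<Rightarrow> real \<Rightarrow> complex" where
  "Ekernel l mc r t b =
     (let a = apar l mc; pt = phi l t; pb = phi l b in
      2 powr (2 * a)
      * complex_of_real (1 - l) powr complex_of_real (l / (1 - l))
      * complex_of_real pb powr (complex_of_real (l / (1 - l)) + 2 * a)
      * complex_of_real ((pt + pb)\<^sup>2 - r\<^sup>2) powr (- a)
      * hyp2F1 a a 1 (complex_of_real (((pt - pb)\<^sup>2 - r\<^sup>2) / ((pt + pb)\<^sup>2 - r\<^sup>2))))"

end

theory Submission
  imports Defs
begin

text \<open>
  With \<open>a = 1/2 + i M\<close> the kernel factorises as
  \<open>|E| = 2 (l-1)^(l/(1-l)) e^(-2 pi M) |phi b|^(1/(1-l)) |F(a,a;1;z)| / sqrt((phi t + phi b)^2 - r^2)\<close>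
  with \<open>0 \<le> z < 1\<close>. The Taylor coefficients \<open>c_n = ((a)_n / n!)^2\<close> of \<open>F\<close> satisfy
  \<open>|c_n| \<le> e^(4 M^2) / (n + 1)\<close>. For \<open>M = 0\<close> this gives \<open>|F| \<le> 1 - ln (1 - z)\<close>, and
  \<open>1 - z \<ge> phi t / phi b\<close>; for \<open>M > 0\<close> the recurrence
  \<open>(2a - 1) c_n = (n+1) c_(n+1) - n c_n - (a-1)^2 c_n / (n+1)\<close> bounds \<open>F\<close> uniformly on \<open>[0,1)\<close>.
  What remains is \<open>\<integral>\<^sub>0\<^sup>D dr / sqrt(S^2 - r^2) = arcsin (D / S) \<le> pi / 2\<close>.
\<close>

definition hyp_coeff :: "complex \<Rightarrow> nat \<Rightarrow> complex" where
  "hyp_coeff a n = (pochhammer a n / of_nat (fact n))\<^sup>2"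

lemma hyp2F1_diagonal_eq: "hyp2F1 a a 1 w = (\<Sum>n. hyp_coeff a n * w ^ n)"
proof -
  have "pochhammer (1::complex) n = of_nat (fact n)" for n
    by (metis of_nat_fact pochhammer_fact)
  then show ?thesis
    by (simp add: hyp2F1_def hyp_coeff_def power2_eq_square)
qed

lemma hyp_coeff_Suc:
  "hyp_coeff a (Suc n) = hyp_coeff a n * ((a + of_nat n) / of_nat (Suc n))\<^sup>2"
proof -
  have "pochhammer a (Suc n) / of_nat (fact (Suc n))
      = pochhammer a n / of_nat (fact n) * ((a + of_nat n) / of_nat (Suc n))"
    by (simp add: pochhammer_rec' fact_Suc algebra_simps)
  then show ?thesis
    by (simp only: hyp_coeff_def power_mult_distrib)
qed

lemma hyp_coeff_recurrence:
  "(2 * a - 1) * hyp_coeff a n =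
     of_nat (Suc n) * hyp_coeff a (Suc n) - of_nat n * hyp_coeff a n
     - (a - 1)\<^sup>2 * hyp_coeff a n / of_nat (Suc n)"
proof -
  have "(of_nat (Suc n) :: complex) \<noteq> 0" by (simp del: of_nat_Suc)
  then show ?thesis
    unfolding hyp_coeff_Suc by (simp add: field_simps power2_eq_square del: of_nat_Suc) (simp add: algebra_simps)
qed

lemma norm_hyp_coeff_Suc:
  assumes "Re a = 1/2"
  shows "norm (hyp_coeff a (Suc n)) =
           norm (hyp_coeff a n) * ((real n + 1/2)\<^sup>2 + (Im a)\<^sup>2) / (real n + 1)\<^sup>2"
proof -
  have "norm (a + of_nat n) ^ 2 = (real n + 1/2)\<^sup>2 + (Im a)\<^sup>2"
    using assms by (simp add: cmod_power2)
  then show ?thesis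
    by (simp add: hyp_coeff_Suc norm_mult norm_divide norm_power del: of_nat_Suc) (simp add: power_divide add_ac)
qed

lemma hyp_coeff_ratio_le:
  fixes x M :: real
  assumes "0 \<le> x"
  shows "((x + 1/2)\<^sup>2 + M\<^sup>2) / (x + 1)\<^sup>2
           \<le> (x + 1) / (x + 2) * exp (4 * M\<^sup>2 / ((x + 1) * (x + 2)))"
proof -
  have "(x + 1/2)\<^sup>2 * (x + 2) \<le> (x + 1) ^ 3"
    using assms by (simp add: power2_eq_square power3_eq_cube algebra_simps)
  moreover have "M\<^sup>2 * (x + 2)\<^sup>2 \<le> M\<^sup>2 * (4 * (x + 1)\<^sup>2)"
    using assms by (intro mult_left_mono) (simp_all add: power2_eq_square algebra_simps)
  ultimately have "((x + 1/2)\<^sup>2 + M\<^sup>2) * ((x + 2) * (x + 2))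
      \<le> (x + 1) * (x + 1) * ((x + 1) * (x + 2) + 4 * M\<^sup>2)"
    using assms mult_right_mono[of "(x + 1/2)\<^sup>2 * (x + 2)" "(x + 1) ^ 3" "x + 2"]
    by (simp add: power2_eq_square power3_eq_cube algebra_simps)
  then have "((x + 1/2)\<^sup>2 + M\<^sup>2) / (x + 1)\<^sup>2
      \<le> (x + 1) / (x + 2) * (1 + 4 * M\<^sup>2 / ((x + 1) * (x + 2)))"
    using assms by (simp add: power2_eq_square divide_simps add_pos_nonneg) (simp add: algebra_simps)
  also have "\<dots> \<le> (x + 1) / (x + 2) * exp (4 * M\<^sup>2 / ((x + 1) * (x + 2)))"
    using assms by (intro mult_left_mono) (auto simp: exp_ge_add_one_self add.commute)
  finally show ?thesis .
qed

text \<open>The extra factor \<open>exp (- 4 (Im a)^2 / (n + 1))\<close> is what makes the induction telescope.\<close>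

lemma norm_hyp_coeff_le_exp:
  assumes "Re a = 1/2"
  shows "norm (hyp_coeff a n) \<le> exp (4 * (Im a)\<^sup>2 - 4 * (Im a)\<^sup>2 / (real n + 1)) / (real n + 1)"
proof (induction n)
  case 0
  show ?case by (simp add: hyp_coeff_def)
next
  case (Suc n)
  define x where "x = real n"
  define \<beta> where "\<beta> = 4 * (Im a)\<^sup>2"
  have x: "0 \<le> x" by (simp add: x_def)
  have "norm (hyp_coeff a (Suc n)) = norm (hyp_coeff a n) * (((x + 1/2)\<^sup>2 + (Im a)\<^sup>2) / (x + 1)\<^sup>2)"
    using assms by (simp add: norm_hyp_coeff_Suc x_def)
  also have "\<dots> \<le> exp (\<beta> - \<beta> / (x + 1)) / (x + 1)
      * ((x + 1) / (x + 2) * exp (\<beta> / ((x + 1) * (x + 2))))"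
    using Suc.IH hyp_coeff_ratio_le[OF x, of "Im a"]
    by (intro mult_mono) (auto simp: x_def \<beta>_def)
  also have "\<dots> = exp (\<beta> - \<beta> / (x + 1) + \<beta> / ((x + 1) * (x + 2))) / (x + 2)"
    using x by (simp add: exp_add)
  also have "\<beta> - \<beta> / (x + 1) + \<beta> / ((x + 1) * (x + 2)) = \<beta> - \<beta> / (x + 2)"
    using x by (simp add: divide_simps) (simp add: algebra_simps)
  finally show ?case by (simp add: x_def \<beta>_def add.commute)
qed

lemma norm_hyp_coeff_le:
  assumes "Re a = 1/2"
  shows "norm (hyp_coeff a n) \<le> exp (4 * (Im a)\<^sup>2) / (real n + 1)"
  using norm_hyp_coeff_le_exp[OF assms, of n] by (rule order_trans) (simp add: divide_right_mono)

lemma norm_hyp_coeff_le_const: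
  assumes "Re a = 1/2"
  shows "norm (hyp_coeff a n) \<le> exp (4 * (Im a)\<^sup>2)"
proof -
  have "exp (4 * (Im a)\<^sup>2) / (real n + 1) \<le> exp (4 * (Im a)\<^sup>2)"
    by (simp add: divide_le_eq)
  then show ?thesis
    using norm_hyp_coeff_le[OF assms, of n] by linarith
qed

lemma norm_of_nat_Suc_hyp_coeff_Suc_le:
  assumes "Re a = 1/2"
  shows "norm (of_nat (Suc n) * hyp_coeff a (Suc n)) \<le> exp (4 * (Im a)\<^sup>2)"
proof -
  have "norm (of_nat (Suc n) * hyp_coeff a (Suc n)) = real (Suc n) * norm (hyp_coeff a (Suc n))"
    by (simp only: norm_mult norm_of_nat)
  also have "\<dots> \<le> real (Suc n) * (exp (4 * (Im a)\<^sup>2) / (real (Suc n) + 1))"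
    using norm_hyp_coeff_le[OF assms, of "Suc n"] by (intro mult_left_mono) auto
  also have "\<dots> \<le> exp (4 * (Im a)\<^sup>2)"
    by (simp add: field_simps)
  finally show ?thesis .
qed

lemma summable_hyp_coeff_series:
  assumes "Re a = 1/2" "norm w < 1"
  shows "summable (\<lambda>n. hyp_coeff a n * w ^ n)"
    and "summable (\<lambda>n. hyp_coeff a n * w ^ n / of_nat (Suc n))"
    and "summable (\<lambda>n. of_nat (Suc n) * hyp_coeff a (Suc n) * w ^ n)"
proof -
  define K where "K = exp (4 * (Im a)\<^sup>2)"
  have geom: "summable (\<lambda>n. K * norm w ^ n)"
    using assms by (intro summable_mult summable_geometric) auto
  have c: "norm (hyp_coeff a n * w ^ n) \<le> K * norm w ^ n" for n
    using norm_hyp_coeff_le_const[OF assms(1)]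
    by (simp add: K_def norm_mult norm_power mult_right_mono)
  then show "summable (\<lambda>n. hyp_coeff a n * w ^ n)"
    by (rule summable_comparison_test'[OF geom])
  have "norm (hyp_coeff a n * w ^ n / of_nat (Suc n)) \<le> norm (hyp_coeff a n * w ^ n)" for n
    by (simp add: norm_divide divide_le_eq mult_le_cancel_left1 del: of_nat_Suc)
  then show "summable (\<lambda>n. hyp_coeff a n * w ^ n / of_nat (Suc n))"
    by (intro summable_comparison_test'[OF geom] order_trans[OF _ c])
  show "summable (\<lambda>n. of_nat (Suc n) * hyp_coeff a (Suc n) * w ^ n)"
    using norm_of_nat_Suc_hyp_coeff_Suc_le[OF assms(1)]
    by (intro summable_comparison_test'[OF geom])
       (simp only: K_def norm_mult[of _ "w ^ _"] norm_power mult_right_mono norm_ge_zero zero_le_power)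
qed

lemma norm_hyp2F1_diagonal_le_log:
  assumes a: "Re a = 1/2" and w: "norm w < 1"
  shows "norm (hyp2F1 a a 1 w) \<le> exp (4 * (Im a)\<^sup>2) * (1 - ln (1 - norm w))"
proof -
  define K where "K = exp (4 * (Im a)\<^sup>2)"
  define x where "x = norm w"
  have x: "0 \<le> x" "x < 1"
    using w by (simp_all add: x_def)
  have "(\<lambda>n. - (x ^ n) / real n) sums ln (1 - x)"
    using ln_series'[of "- x"] x by simp
  then have "(\<lambda>n. x ^ n / real n) sums (- ln (1 - x))"
    using sums_minus by fastforce
  then have log: "(\<lambda>n. x ^ Suc n / real (Suc n)) sums (- ln (1 - x))"
    using sums_Suc_iff[of "\<lambda>n. x ^ n / real n"] by simp
  have geom: "(\<lambda>n. (1 - x) * x ^ n) sums 1"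
    using sums_mult[OF geometric_sums[of x], of "1 - x"] x by simp
  have "norm (hyp2F1 a a 1 w) \<le> K * (- ln (1 - x) + 1)"
    unfolding hyp2F1_diagonal_eq
  proof (rule norm_sums_le)
    show "(\<lambda>n. hyp_coeff a n * w ^ n) sums (\<Sum>n. hyp_coeff a n * w ^ n)"
      using summable_hyp_coeff_series(1)[OF a w] by (rule summable_sums)
    show "(\<lambda>n. K * (x ^ Suc n / real (Suc n) + (1 - x) * x ^ n)) sums (K * (- ln (1 - x) + 1))"
      by (intro sums_mult sums_add log geom)
    show "norm (hyp_coeff a n * w ^ n) \<le> K * (x ^ Suc n / real (Suc n) + (1 - x) * x ^ n)" for n
    proof -
      have "norm (hyp_coeff a n * w ^ n) \<le> K / real (Suc n) * x ^ n"
        using norm_hyp_coeff_le[OF a, of n] unfolding norm_mult norm_power x_def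
        by (intro mult_right_mono) (simp_all add: K_def add.commute)
      also have "\<dots> = K * (x ^ Suc n / real (Suc n) + (1 - x) * x ^ n / real (Suc n))"
        by (simp add: field_simps del: of_nat_Suc)
      also have "\<dots> \<le> K * (x ^ Suc n / real (Suc n) + (1 - x) * x ^ n)"
        using x by (intro mult_left_mono add_left_mono divide_left_mono[of 1, simplified])
          (simp_all add: K_def)
      finally show ?thesis .
    qed
  qed
  then show ?thesis
    by (simp add: K_def x_def)
qed

text \<open>
  As \<open>|c_n|\<close> decays only like \<open>1/n\<close>, the power series alone gives a logarithmic bound near
  \<open>w = 1\<close>. The recurrence for \<open>c_n\<close> trades \<open>(2a - 1) F\<close> for \<open>(1 - w)\<close> times a series with
  bounded coefficients plus an absolutely convergent one.
\<close>

lemma hyp2F1_diagonal_decomposition: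
  assumes "Re a = 1/2" "norm w < 1"
  shows "(2 * a - 1) * hyp2F1 a a 1 w =
           (1 - w) * (\<Sum>n. of_nat (Suc n) * hyp_coeff a (Suc n) * w ^ n)
           - (a - 1)\<^sup>2 * (\<Sum>n. hyp_coeff a n * w ^ n / of_nat (Suc n))"
proof -
  define U where "U = (\<Sum>n. of_nat (Suc n) * hyp_coeff a (Suc n) * w ^ n)"
  define H where "H = (\<Sum>n. hyp_coeff a n * w ^ n / of_nat (Suc n))"
  note summable = summable_hyp_coeff_series[OF assms]
  have F: "(\<lambda>n. hyp_coeff a n * w ^ n) sums hyp2F1 a a 1 w"
    using summable(1) by (simp add: hyp2F1_diagonal_eq summable_sums)
  have U: "(\<lambda>n. of_nat (Suc n) * hyp_coeff a (Suc n) * w ^ n) sums U"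
    using summable(3) by (simp add: U_def summable_sums)
  have H: "(\<lambda>n. hyp_coeff a n * w ^ n / of_nat (Suc n)) sums H"
    using summable(2) by (simp add: H_def summable_sums)
  have "(\<lambda>n. w * (of_nat (Suc n) * hyp_coeff a (Suc n) * w ^ n)) sums (w * U)"
    by (rule sums_mult[OF U])
  then have V: "(\<lambda>n. of_nat n * hyp_coeff a n * w ^ n) sums (w * U)"
    using sums_Suc_iff[of "\<lambda>n. of_nat n * hyp_coeff a n * w ^ n" "w * U"]
    by (simp add: algebra_simps del: of_nat_Suc)
  have "(\<lambda>n. of_nat (Suc n) * hyp_coeff a (Suc n) * w ^ n - of_nat n * hyp_coeff a n * w ^ n
           - (a - 1)\<^sup>2 * (hyp_coeff a n * w ^ n / of_nat (Suc n))) sums (U - w * U - (a - 1)\<^sup>2 * H)"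
    by (intro sums_diff U V sums_mult H)
  moreover have "(\<lambda>n. (2 * a - 1) * (hyp_coeff a n * w ^ n)) sums ((2 * a - 1) * hyp2F1 a a 1 w)"
    by (rule sums_mult[OF F])
  moreover have "(2 * a - 1) * (hyp_coeff a n * w ^ n) =
      of_nat (Suc n) * hyp_coeff a (Suc n) * w ^ n - of_nat n * hyp_coeff a n * w ^ n
      - (a - 1)\<^sup>2 * (hyp_coeff a n * w ^ n / of_nat (Suc n))" for n
    by (simp only: mult.assoc[symmetric] hyp_coeff_recurrence)
       (simp add: algebra_simps del: of_nat_Suc)
  ultimately have "(2 * a - 1) * hyp2F1 a a 1 w = U - w * U - (a - 1)\<^sup>2 * H"
    by (simp add: sums_unique2)
  then show ?thesis
    by (simp add: U_def H_def algebra_simps)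
qed

lemma norm_suminf_shifted_hyp_coeff_le:
  assumes a: "Re a = 1/2" and w: "norm w < 1"
  shows "norm (\<Sum>n. of_nat (Suc n) * hyp_coeff a (Suc n) * w ^ n) \<le> exp (4 * (Im a)\<^sup>2) / (1 - norm w)"
proof -
  define K where "K = exp (4 * (Im a)\<^sup>2)"
  have "norm (\<Sum>n. of_nat (Suc n) * hyp_coeff a (Suc n) * w ^ n) \<le> K * (1 / (1 - norm w))"
  proof (rule norm_sums_le)
    show "(\<lambda>n. of_nat (Suc n) * hyp_coeff a (Suc n) * w ^ n) sums
        (\<Sum>n. of_nat (Suc n) * hyp_coeff a (Suc n) * w ^ n)"
      using summable_hyp_coeff_series(3)[OF a w] by (rule summable_sums)
    show "(\<lambda>n. K * norm w ^ n) sums (K * (1 / (1 - norm w)))"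
      using w by (intro sums_mult geometric_sums) auto
    show "norm (of_nat (Suc n) * hyp_coeff a (Suc n) * w ^ n) \<le> K * norm w ^ n" for n
      using norm_of_nat_Suc_hyp_coeff_Suc_le[OF a, of n]
      by (simp only: K_def norm_mult[of _ "w ^ _"] norm_power mult_right_mono norm_ge_zero zero_le_power)
  qed
  then show ?thesis
    by (simp add: K_def)
qed

lemma norm_suminf_averaged_hyp_coeff_le:
  assumes a: "Re a = 1/2" and w: "norm w < 1"
  shows "norm (\<Sum>n. hyp_coeff a n * w ^ n / of_nat (Suc n)) \<le> exp (4 * (Im a)\<^sup>2) * (pi\<^sup>2 / 6)"
proof (rule norm_sums_le)
  define K where "K = exp (4 * (Im a)\<^sup>2)"
  show "(\<lambda>n. hyp_coeff a n * w ^ n / of_nat (Suc n)) sums (\<Sum>n. hyp_coeff a n * w ^ n / of_nat (Suc n))"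
    using summable_hyp_coeff_series(2)[OF a w] by (rule summable_sums)
  show "(\<lambda>n. K * (1 / (real n + 1)\<^sup>2)) sums (K * (pi\<^sup>2 / 6))"
    using inverse_squares_sums by (intro sums_mult) (simp add: add.commute)
  show "norm (hyp_coeff a n * w ^ n / of_nat (Suc n)) \<le> K * (1 / (real n + 1)\<^sup>2)" for n
  proof -
    have "norm (hyp_coeff a n * w ^ n / of_nat (Suc n)) = norm (hyp_coeff a n) * norm w ^ n / real (Suc n)"
      by (simp add: norm_mult norm_divide norm_power del: of_nat_Suc)
    also have "\<dots> \<le> K / (real n + 1) * 1 / real (Suc n)"
      using norm_hyp_coeff_le[OF a, of n] w
      by (intro divide_right_mono mult_mono) (auto simp: K_def power_le_one)
    finally show ?thesis
      by (simp add: power2_eq_square add.commute)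
  qed
qed

definition hyp2F1_diagonal_bound :: "complex \<Rightarrow> real" where
  "hyp2F1_diagonal_bound a =
     exp (4 * (Im a)\<^sup>2) * (1 + (norm (a - 1))\<^sup>2 * pi\<^sup>2 / 6) / (2 * \<bar>Im a\<bar>)"

lemma norm_hyp2F1_diagonal_le_bound:
  assumes a: "Re a = 1/2" "Im a \<noteq> 0" and z: "0 \<le> z" "z < 1"
  shows "norm (hyp2F1 a a 1 (of_real z)) \<le> hyp2F1_diagonal_bound a"
proof -
  define K where "K = exp (4 * (Im a)\<^sup>2)"
  define w where "w = complex_of_real z"
  define U where "U = (\<Sum>n. of_nat (Suc n) * hyp_coeff a (Suc n) * w ^ n)"
  define H where "H = (\<Sum>n. hyp_coeff a n * w ^ n / of_nat (Suc n))"
  have "1 - w = complex_of_real (1 - z)"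
    by (simp add: w_def)
  then have w: "norm w = z" "norm (1 - w) = 1 - z"
    using z by (simp_all add: w_def del: of_real_diff)
  have "norm ((2 * a - 1) * hyp2F1 a a 1 w) = norm ((1 - w) * U - (a - 1)\<^sup>2 * H)"
    using hyp2F1_diagonal_decomposition[OF a(1), of w] z by (simp add: w U_def H_def)
  also have "\<dots> \<le> (1 - z) * norm U + (norm (a - 1))\<^sup>2 * norm H"
    by (rule order_trans[OF norm_triangle_ineq4]) (simp add: w norm_mult norm_power)
  also have "\<dots> \<le> (1 - z) * (K / (1 - z)) + (norm (a - 1))\<^sup>2 * (K * (pi\<^sup>2 / 6))"
    using z norm_suminf_shifted_hyp_coeff_le[OF a(1), of w] norm_suminf_averaged_hyp_coeff_le[OF a(1), of w]
    by (intro add_mono mult_left_mono) (simp_all add: w K_def U_def H_def)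
  also have "\<dots> = K * (1 + (norm (a - 1))\<^sup>2 * pi\<^sup>2 / 6)"
    using z by (simp add: field_simps)
  finally have "norm (2 * a - 1) * norm (hyp2F1 a a 1 w) \<le> K * (1 + (norm (a - 1))\<^sup>2 * pi\<^sup>2 / 6)"
    by (simp only: norm_mult)
  moreover have "norm (2 * a - 1) = 2 * \<bar>Im a\<bar>"
  proof -
    have "2 * a - 1 = complex_of_real (2 * Im a) * \<i>"
      using a(1) by (simp add: complex_eq_iff)
    then show ?thesis
      by (simp add: norm_mult)
  qed
  ultimately have "2 * \<bar>Im a\<bar> * norm (hyp2F1 a a 1 w) \<le> K * (1 + (norm (a - 1))\<^sup>2 * pi\<^sup>2 / 6)"
    by simp
  then show ?thesis
    using a(2) by (simp add: hyp2F1_diagonal_bound_def K_def w_def field_simps)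
qed

lemma phi_neg:
  assumes "l > 1" "0 < t"
  shows "phi l t < 0"
  using assms by (simp add: phi_def divide_pos_neg)

lemma phi_mono:
  assumes "l > 1" "0 < b" "b \<le> t"
  shows "phi l b \<le> phi l t"
proof -
  have "t powr (1 - l) \<le> b powr (1 - l)"
    using assms by (intro powr_mono2') auto
  then show ?thesis
    using assms unfolding phi_def by (intro divide_right_mono_neg) auto
qed

lemma hyp_arg_bounds:
  fixes p q r :: real
  assumes "q \<le> p" "p < 0" "0 \<le> r" "r \<le> p - q"
  defines "z \<equiv> ((p - q)\<^sup>2 - r\<^sup>2) / ((p + q)\<^sup>2 - r\<^sup>2)"
  shows "0 \<le> z" "z < 1" "- ln (1 - z) \<le> ln (q / p)"
proof -
  define X where "X = (p + q)\<^sup>2 - r\<^sup>2"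
  have "r\<^sup>2 \<le> (p - q)\<^sup>2"
    using assms by (intro power_mono) auto
  moreover have "(p + q)\<^sup>2 - (p - q)\<^sup>2 = 4 * p * q"
    by (simp add: power2_eq_square algebra_simps)
  moreover have pq: "0 < p * q"
    using assms by (simp add: mult_neg_neg)
  ultimately have X: "0 < X" "r\<^sup>2 \<le> (p - q)\<^sup>2"
    by (simp_all add: X_def)
  then show "0 \<le> z"
    by (simp add: z_def X_def[symmetric])
  have omz: "1 - z = 4 * p * q / X"
    using X by (simp add: z_def X_def[symmetric] field_simps) (simp add: X_def power2_eq_square algebra_simps)
  moreover have "0 < 4 * p * q / X"
    using X pq by (simp add: mult.assoc)
  ultimately show "z < 1"
    by linarith
  have "X \<le> (2 * q)\<^sup>2"
  proof -
    have "\<bar>p + q\<bar> \<le> \<bar>2 * q\<bar>"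
      using assms by auto
    then have "(p + q)\<^sup>2 \<le> (2 * q)\<^sup>2"
      by (simp only: abs_le_square_iff)
    moreover have "0 \<le> r\<^sup>2"
      by simp
    ultimately show ?thesis
      unfolding X_def by linarith
  qed
  then have "p / q \<le> 1 - z"
    using X pq assms unfolding omz by (simp add: divide_simps power2_eq_square)
  then have "ln (p / q) \<le> ln (1 - z)"
    using assms by (intro ln_mono) (auto simp: divide_neg_neg)
  then show "- ln (1 - z) \<le> ln (q / p)"
    using assms by (simp add: ln_div)
qed

definition kernel_arg :: "real \<Rightarrow> real \<Rightarrow> real \<Rightarrow> real \<Rightarrow> real" where
  "kernel_arg l r t b = ((phi l t - phi l b)\<^sup>2 - r\<^sup>2) / ((phi l t + phi l b)\<^sup>2 - r\<^sup>2)"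

lemma norm_Ekernel:
  assumes l: "l > 1" and b: "0 < b" and r: "r\<^sup>2 < (phi l t + phi l b)\<^sup>2"
  shows "norm (Ekernel l mc r t b) =
           2 * (l - 1) powr (l / (1 - l)) * exp (- 2 * pi * Mpar l mc) * \<bar>phi l b\<bar> powr (1 / (1 - l))
           * norm (hyp2F1 (apar l mc) (apar l mc) 1 (of_real (kernel_arg l r t b)))
           / sqrt ((phi l t + phi l b)\<^sup>2 - r\<^sup>2)"
proof -
  define a where "a = apar l mc"
  define X where "X = (phi l t + phi l b)\<^sup>2 - r\<^sup>2"
  have a: "Re a = 1/2" "Im a = Mpar l mc"
    by (simp_all add: a_def apar_def)
  have X: "0 < X"
    using r by (simp add: X_def)
  have pb: "phi l b < 0"
    using phi_neg[OF l b] .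
  have "Ekernel l mc r t b = 2 powr (2 * a) * complex_of_real (1 - l) powr complex_of_real (l / (1 - l))
      * complex_of_real (phi l b) powr (complex_of_real (l / (1 - l)) + 2 * a)
      * complex_of_real X powr (- a) * hyp2F1 a a 1 (of_real (kernel_arg l r t b))"
    by (simp add: Ekernel_def kernel_arg_def Let_def a_def X_def)
  moreover have "norm ((2::complex) powr (2 * a)) = 2"
    by (simp add: norm_powr_real_powr a)
  moreover have "norm (complex_of_real (1 - l) powr complex_of_real (l / (1 - l))) = (l - 1) powr (l / (1 - l))"
    using l by (simp add: norm_powr_real_powr' del: of_real_diff)
  moreover have "norm (complex_of_real (phi l b) powr (complex_of_real (l / (1 - l)) + 2 * a))
      = \<bar>phi l b\<bar> powr (1 / (1 - l)) * exp (- 2 * pi * Mpar l mc)"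
    \<comment> \<open>the negative real \<open>phi l b\<close> has argument \<open>pi\<close>\<close>
  proof -
    have "l / (1 - l) + 1 = 1 / (1 - l)"
      using l by (simp add: field_simps)
    then show ?thesis
      using pb by (simp add: norm_powr_complex a)
  qed
  moreover have "norm (complex_of_real X powr (- a)) = 1 / sqrt X"
  proof -
    have "norm (complex_of_real X powr (- a)) = X powr (- (1/2))"
      using X by (simp add: norm_powr_real_powr a)
    then show ?thesis
      using X by (simp add: powr_minus_divide powr_half_sqrt)
  qed
  ultimately show ?thesis
    by (simp add: norm_mult a_def X_def)
qed

lemma interval_integral_inverse_sqrt:
  fixes S D :: real
  assumes "0 \<le> D" "D < S"
  shows "interval_lebesgue_integrable lborel 0 D (\<lambda>r. 1 / sqrt (S\<^sup>2 - r\<^sup>2))"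
    and "(LBINT r=0..D. 1 / sqrt (S\<^sup>2 - r\<^sup>2)) = arcsin (D / S)"
proof -
  have pos: "0 < S\<^sup>2 - r\<^sup>2" if "0 \<le> r" "r \<le> D" for r
    using that assms power_strict_mono[of r S 2] by simp
  have cont: "isCont (\<lambda>r. 1 / sqrt (S\<^sup>2 - r\<^sup>2)) r" if "0 \<le> r" "r \<le> D" for r
    using pos[OF that] by (intro continuous_intros) auto
  have "interval_lebesgue_integrable lborel (ereal 0) (ereal D) (\<lambda>r. 1 / sqrt (S\<^sup>2 - r\<^sup>2))"
    by (rule interval_integrable_isCont) (use cont assms in auto)
  then show "interval_lebesgue_integrable lborel 0 D (\<lambda>r. 1 / sqrt (S\<^sup>2 - r\<^sup>2))"
    by (simp add: zero_ereal_def)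
  have "((\<lambda>r. arcsin (r / S)) has_real_derivative 1 / sqrt (S\<^sup>2 - r\<^sup>2)) (at r)"
    if "0 \<le> r" "r \<le> D" for r
  proof -
    have "-1 < r / S" "r / S < 1"
      using that assms by (simp_all add: field_simps)
    moreover have "sqrt (S\<^sup>2 - r\<^sup>2) = S * sqrt (1 - (r / S)\<^sup>2)"
    proof -
      have "S\<^sup>2 - r\<^sup>2 = S\<^sup>2 * (1 - (r / S)\<^sup>2)"
        using assms that by (simp add: field_simps)
      then show ?thesis
        using assms that by (simp add: real_sqrt_mult)
    qed
    ultimately show ?thesis
      using assms that by (auto intro!: derivative_eq_intros simp: field_simps)
  qed
  then have "(LBINT r=ereal 0..ereal D. 1 / sqrt (S\<^sup>2 - r\<^sup>2)) = arcsin (D / S) - arcsin (0 / S)"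
    using assms by (intro interval_integral_FTC_finite)
      (auto intro!: continuous_at_imp_continuous_on cont
            simp: has_real_derivative_iff_has_vector_derivative[symmetric] has_field_derivative_at_within)
  then show "(LBINT r=0..D. 1 / sqrt (S\<^sup>2 - r\<^sup>2)) = arcsin (D / S)"
    by (simp add: zero_ereal_def)
qed

lemma interval_integral_le_of_inverse_sqrt_bound:
  fixes f :: "real \<Rightarrow> real"
  assumes D: "0 \<le> D" "D < S" and c: "0 \<le> c"
    and f: "\<And>r. 0 < r \<Longrightarrow> r < D \<Longrightarrow> f r \<le> c / sqrt (S\<^sup>2 - r\<^sup>2)"
  shows "(LBINT r=0..D. f r) \<le> c * pi / 2"
proof (cases "set_integrable lborel {0<..<D} f")
  case True
  have "(LBINT r=0..D. f r) = (LINT r:{0<..<D}|lborel. f r)"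
    using D by (simp add: interval_lebesgue_integral_le_eq zero_ereal_def)
  also have "\<dots> \<le> (LINT r:{0<..<D}|lborel. c * (1 / sqrt (S\<^sup>2 - r\<^sup>2)))"
  proof (rule set_integral_mono[OF True set_integrable_mult_right])
    show "set_integrable lborel {0<..<D} (\<lambda>r. 1 / sqrt (S\<^sup>2 - r\<^sup>2))"
      using interval_integral_inverse_sqrt(1)[OF D] D
      by (simp add: interval_lebesgue_integrable_def zero_ereal_def)
    show "f r \<le> c * (1 / sqrt (S\<^sup>2 - r\<^sup>2))" if "r \<in> {0<..<D}" for r
      using f that by simp
  qed
  also have "\<dots> = c * arcsin (D / S)"
    using interval_integral_inverse_sqrt(2)[OF D] D
    by (simp only: set_integral_mult_right) (simp add: interval_lebesgue_integral_le_eq zero_ereal_def)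
  also have "\<dots> \<le> c * (pi / 2)"
    using c D by (intro mult_left_mono arcsin_ubound) (auto simp: field_simps)
  finally show ?thesis by simp
next
  case False
  then have "(LBINT r=0..D. f r) = 0"
    using D by (simp add: interval_lebesgue_integral_le_eq zero_ereal_def set_lebesgue_integral_def
        set_integrable_def not_integrable_integral_eq)
  then show ?thesis
    using c by simp
qed

definition Ekernel_const :: "real \<Rightarrow> real \<Rightarrow> real" where
  "Ekernel_const l mc = 2 * (l - 1) powr (l / (1 - l)) * exp (- 2 * pi * Mpar l mc)
     * (if Mpar l mc = 0 then 1 else hyp2F1_diagonal_bound (apar l mc))"

lemma Ekernel_const_nonneg: "0 \<le> Ekernel_const l mc"
  by (simp add: Ekernel_const_def hyp2F1_diagonal_bound_def)

lemma norm_Ekernel_le: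
  assumes l: "l > 1" and M: "0 \<le> Mpar l mc" and b: "0 < b" "b \<le> t"
    and r: "0 \<le> r" "r < phi l t - phi l b"
  shows "norm (Ekernel l mc r t b) \<le>
           Ekernel_const l mc * \<bar>phi l b\<bar> powr (1 / (1 - l))
           * (1 + ln (phi l b / phi l t)) powr (1 - sgn (Mpar l mc))
           / sqrt ((phi l t + phi l b)\<^sup>2 - r\<^sup>2)"
proof -
  define a where "a = apar l mc"
  define z where "z = kernel_arg l r t b"
  have a: "Re a = 1/2" "Im a = Mpar l mc"
    by (simp_all add: a_def apar_def)
  have pt: "phi l t < 0" and pbt: "phi l b \<le> phi l t"
    using phi_neg[OF l] phi_mono[OF l b] b by auto
  note z_bounds = hyp_arg_bounds[OF pbt pt r(1) less_imp_le[OF r(2)], folded kernel_arg_def z_def]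
  have "r\<^sup>2 < (- (phi l t + phi l b))\<^sup>2"
    using r pt by (intro power_strict_mono) auto
  then have X: "r\<^sup>2 < (phi l t + phi l b)\<^sup>2"
    by (simp only: power2_minus)
  have log: "1 \<le> 1 + ln (phi l b / phi l t)"
    using pt pbt by (simp add: le_divide_eq)
  have F: "norm (hyp2F1 a a 1 (of_real z)) \<le>
      (if Mpar l mc = 0 then 1 else hyp2F1_diagonal_bound a) * (1 + ln (phi l b / phi l t)) powr (1 - sgn (Mpar l mc))"
  proof (cases "Mpar l mc = 0")
    case True
    then have "norm (hyp2F1 a a 1 (of_real z)) \<le> 1 - ln (1 - z)"
      using norm_hyp2F1_diagonal_le_log[OF a(1), of "of_real z"] z_bounds a by simp
    then show ?thesis
      using True z_bounds log by simp
  next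
    case False
    then show ?thesis
      using norm_hyp2F1_diagonal_le_bound[OF a(1) _ z_bounds(1,2)] M log a by simp
  qed
  define P where "P = 2 * (l - 1) powr (l / (1 - l)) * exp (- 2 * pi * Mpar l mc) * \<bar>phi l b\<bar> powr (1 / (1 - l))"
  have "norm (Ekernel l mc r t b) = P * norm (hyp2F1 a a 1 (of_real z)) / sqrt ((phi l t + phi l b)\<^sup>2 - r\<^sup>2)"
    unfolding norm_Ekernel[OF l b(1) X] by (simp add: P_def a_def z_def)
  also have "\<dots> \<le> P * ((if Mpar l mc = 0 then 1 else hyp2F1_diagonal_bound a)
      * (1 + ln (phi l b / phi l t)) powr (1 - sgn (Mpar l mc))) / sqrt ((phi l t + phi l b)\<^sup>2 - r\<^sup>2)"
    using X by (intro divide_right_mono mult_left_mono F) (simp_all add: P_def)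
  also have "\<dots> = Ekernel_const l mc * \<bar>phi l b\<bar> powr (1 / (1 - l))
      * (1 + ln (phi l b / phi l t)) powr (1 - sgn (Mpar l mc)) / sqrt ((phi l t + phi l b)\<^sup>2 - r\<^sup>2)"
    by (simp add: Ekernel_const_def P_def a_def mult_ac)
  finally show ?thesis .
qed

lemma Mpar_nonneg:
  assumes "l > 1" "(3 * l - 1)\<^sup>2 \<le> 4 * mc\<^sup>2"
  shows "0 \<le> Mpar l mc"
  using assms by (simp add: Mpar_def power2_commute)

theorem lemma3p3:
  fixes l mc :: real
  assumes "l > 1" and "4 * mc\<^sup>2 \<ge> (3 * l - 1)\<^sup>2"
  shows "\<exists>C::real. \<forall>t b. 1 \<le> t \<longrightarrow> 1 \<le> b \<longrightarrow> b \<le> t \<longrightarrow>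
           (LBINT r=0..(phi l t - phi l b). norm (Ekernel l mc r t b))
             \<le> C * \<bar>phi l b\<bar> powr (1 / (1 - l))
                 * (1 + ln (phi l b / phi l t)) powr (1 - sgn (Mpar l mc))"
proof (intro exI allI impI)
  fix t b :: real
  assume "1 \<le> t" "1 \<le> b" "b \<le> t"
  then have b: "0 < b" "b \<le> t"
    by simp_all
  have pt: "phi l t < 0" and pbt: "phi l b \<le> phi l t"
    using phi_neg[OF assms(1)] phi_mono[OF assms(1) b] b by auto
  define c where "c = Ekernel_const l mc * \<bar>phi l b\<bar> powr (1 / (1 - l))
    * (1 + ln (phi l b / phi l t)) powr (1 - sgn (Mpar l mc))"
  have "(LBINT r=0..(phi l t - phi l b). norm (Ekernel l mc r t b)) \<le> c * pi / 2"
  proof (rule interval_integral_le_of_inverse_sqrt_bound)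
    show "0 \<le> phi l t - phi l b" "phi l t - phi l b < - (phi l t + phi l b)" "0 \<le> c"
      using pt pbt Ekernel_const_nonneg by (simp_all add: c_def)
    show "norm (Ekernel l mc r t b) \<le> c / sqrt ((- (phi l t + phi l b))\<^sup>2 - r\<^sup>2)"
      if "0 < r" "r < phi l t - phi l b" for r
      using norm_Ekernel_le[OF assms(1) Mpar_nonneg[OF assms] b, of r] that
      unfolding power2_minus c_def by simp
  qed
  then show "(LBINT r=0..(phi l t - phi l b). norm (Ekernel l mc r t b))
      \<le> (Ekernel_const l mc * pi / 2) * \<bar>phi l b\<bar> powr (1 / (1 - l))
          * (1 + ln (phi l b / phi l t)) powr (1 - sgn (Mpar l mc))"
    by (simp add: c_def mult_ac)
qed

end
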